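(* Let $N\ge 2$ and $0<\gamma_1\le\dots\le\gamma_N$. There exists a sum-rate optimal spanning tree on $\{1,\dots,N\}$ in which vertex $N$ has degree $1$.
   Context: For distinct $i,j$ put $\varphi(i,j)=\log_2\!\big(\gamma_i+\frac{\gamma_i}{\gamma_i+\gamma_j}\big)$. For a spanning tree $T$ on $\{1,\dots,N\}$ with neighbor sets $A_i^T$, define $R_{\mathrm s}(T)=\frac{1}{2(N-1)}\sum_{i=1}^N \min_{j\in A_i^T}\varphi(i,j)$. A spanning tree is called sum-rate optimal if it maximizes $R_{\mathrm s}$ over all spanning trees on $\{1,\dots,N\}$. *)

theory Defs
  imports Complex_Main
begin

definition edges_on :: "nat \<Rightarrow> nat set set" where
  "edges_on N = {e. \<exists>i j. e = {i, j} \<and> i \<noteq> j \<and> i \<in> {1..N} \<and> j \<in> {1..N}}"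

definition adj :: "nat set set \<Rightarrow> (nat \<times> nat) set" where
  "adj T = {(i, j). {i, j} \<in> T \<and> i \<noteq> j}"

definition connected_on :: "nat \<Rightarrow> nat set set \<Rightarrow> bool" where
  "connected_on N T \<longleftrightarrow> (\<forall>i\<in>{1..N}. \<forall>j\<in>{1..N}. (i, j) \<in> (adj T)\<^sup>*)"

text \<open>A spanning tree: a connected edge set on {1..N} that is acyclic, where acyclicity
  is expressed as: every edge is a bridge (removing it disconnects the graph).\<close>
definition spanning_tree :: "nat \<Rightarrow> nat set set \<Rightarrow> bool" where
  "spanning_tree N T \<longleftrightarrow> T \<subseteq> edges_on N \<and> connected_on N T \<and>
     (\<forall>e\<in>T. \<not> connected_on N (T - {e}))"

definition nbrs :: "nat set set \<Rightarrow> nat \<Rightarrow> nat set" where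
  "nbrs T i = {j. {i, j} \<in> T \<and> j \<noteq> i}"

definition phi :: "(nat \<Rightarrow> real) \<Rightarrow> nat \<Rightarrow> nat \<Rightarrow> real" where
  "phi \<gamma> i j = log 2 (\<gamma> i + \<gamma> i / (\<gamma> i + \<gamma> j))"

definition sum_rate :: "(nat \<Rightarrow> real) \<Rightarrow> nat \<Rightarrow> nat set set \<Rightarrow> real" where
  "sum_rate \<gamma> N T = 1 / (2 * (real N - 1)) * (\<Sum>i=1..N. Min (phi \<gamma> i ` nbrs T i))"

definition sum_rate_optimal :: "(nat \<Rightarrow> real) \<Rightarrow> nat \<Rightarrow> nat set set \<Rightarrow> bool" where
  "sum_rate_optimal \<gamma> N T \<longleftrightarrow> spanning_tree N T \<and>
     (\<forall>T'. spanning_tree N T' \<longrightarrow> sum_rate \<gamma> N T' \<le> sum_rate \<gamma> N T)"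

end

theory Submission
  imports Defs "HOL-Library.Transitive_Closure_Table"
begin

text \<open>Writing \<open>phi \<gamma> i j = log 2 (\<gamma> i) + psi (\<gamma> i + \<gamma> j)\<close> with \<open>psi\<close> decreasing, the star
  centred at the weakest vertex 1 is optimal: every vertex \<open>i \<noteq> 1\<close> gets its best possible
  value \<open>phi \<gamma> i 1\<close>, and vertex 1 gets \<open>phi \<gamma> 1 N\<close>. In an arbitrary spanning tree, follow the
  path \<open>1 = v\<^sub>0, \<dots>, v\<^sub>m = N\<close>; each \<open>v\<^sub>k\<close> (\<open>k < m\<close>) is bounded by \<open>phi \<gamma> v\<^sub>k v\<^sub>k\<^sub>+\<^sub>1\<close>, and
  shifting the \<open>log 2 (\<gamma> v\<^sub>k\<^sub>+\<^sub>1)\<close> terms one step back along the path shows that these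
  values sum to at most \<open>phi \<gamma> 1 N + \<Sum>\<^sub>0\<^sub><\<^sub>k\<^sub><\<^sub>m phi \<gamma> v\<^sub>k 1\<close>, the star's value on
  the same vertices. For N and the vertices off the path the bound \<open>phi \<gamma> i 1\<close> holds
  vertexwise. In the star, N is a leaf.\<close>

definition psi :: "real \<Rightarrow> real" where
  "psi s = log 2 (1 + 1 / s)"

definition node_rate :: "(nat \<Rightarrow> real) \<Rightarrow> nat set set \<Rightarrow> nat \<Rightarrow> real" where
  "node_rate \<gamma> T i = Min (phi \<gamma> i ` nbrs T i)"

definition star_tree :: "nat \<Rightarrow> nat set set" where
  "star_tree N = {{1, i} | i. i \<in> {2..N}}"

lemma psi_antimono:
  assumes "0 < s" "s \<le> t"
  shows "psi t \<le> psi s"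
proof -
  have "1 / t \<le> 1 / s" using assms by (intro divide_left_mono) auto
  moreover have "0 < 1 + 1 / t" using assms by (simp add: add_pos_pos)
  ultimately show ?thesis unfolding psi_def by simp
qed

lemma phi_eq_log_plus_psi:
  assumes "0 < \<gamma> i" "0 < \<gamma> j"
  shows "phi \<gamma> i j = log 2 (\<gamma> i) + psi (\<gamma> i + \<gamma> j)"
proof -
  have "\<gamma> i + \<gamma> i / (\<gamma> i + \<gamma> j) = \<gamma> i * (1 + 1 / (\<gamma> i + \<gamma> j))"
    by (simp add: algebra_simps)
  moreover have "0 < 1 + 1 / (\<gamma> i + \<gamma> j)" using assms by (simp add: add_pos_pos)
  ultimately show ?thesis unfolding phi_def psi_def using assms by (simp add: log_mult)
qed

lemma sum_rate_eq: "sum_rate \<gamma> N T = 1 / (2 * (real N - 1)) * (\<Sum>i=1..N. node_rate \<gamma> T i)"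
  unfolding sum_rate_def node_rate_def ..

lemma nbrs_subset_vertices: "T \<subseteq> edges_on N \<Longrightarrow> nbrs T i \<subseteq> {1..N}"
  unfolding nbrs_def edges_on_def by (auto simp: doubleton_eq_iff)

lemma adj_imp_nbrs: "(i, j) \<in> adj T \<Longrightarrow> j \<in> nbrs T i"
  unfolding adj_def nbrs_def by auto

lemma node_rate_le:
  assumes "T \<subseteq> edges_on N" "j \<in> nbrs T i"
  shows "node_rate \<gamma> T i \<le> phi \<gamma> i j"
proof -
  have "finite (nbrs T i)" using nbrs_subset_vertices[OF assms(1)] finite_subset by blast
  thus ?thesis unfolding node_rate_def using assms(2) by (intro Min_le) auto
qed

lemma connected_on_nbrs_nonempty:
  assumes "connected_on N T" "i \<in> {1..N}" "j \<in> {1..N}" "i \<noteq> j"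
  obtains k where "k \<in> nbrs T i"
proof -
  have "(i, j) \<in> (adj T)\<^sup>*" using assms unfolding connected_on_def by auto
  then show ?thesis
    using assms(4) that by (cases rule: converse_rtranclE) (auto dest: adj_imp_nbrs)
qed

lemma connected_on_distinct_path:
  assumes "T \<subseteq> edges_on N" "connected_on N T" "i \<in> {1..N}" "j \<in> {1..N}"
  obtains xs where "rtrancl_path (\<lambda>x y. (x, y) \<in> adj T) i xs j"
    "distinct (i # xs)" "set (i # xs) \<subseteq> {1..N}"
proof -
  have "(\<lambda>x y. (x, y) \<in> adj T)\<^sup>*\<^sup>* i j"
    using assms unfolding connected_on_def by (simp add: rtranclp_rtrancl_eq)
  then obtain xs where path: "rtrancl_path (\<lambda>x y. (x, y) \<in> adj T) i xs j"
    and dist: "distinct (i # xs)"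
    using rtranclp_eq_rtrancl_path rtrancl_path_distinct by metis
  have "set xs \<subseteq> {1..N}"
    using rtrancl_path_Range[OF path] adj_imp_nbrs nbrs_subset_vertices[OF assms(1)] by blast
  with path dist assms(3) show ?thesis using that by simp
qed

locale sorted_gains =
  fixes N :: nat and \<gamma> :: "nat \<Rightarrow> real"
  assumes gain_first_pos: "0 < \<gamma> 1"
    and gain_mono: "\<And>i j. 1 \<le> i \<Longrightarrow> i \<le> j \<Longrightarrow> j \<le> N \<Longrightarrow> \<gamma> i \<le> \<gamma> j"
begin

lemma gain_first_le: "i \<in> {1..N} \<Longrightarrow> \<gamma> 1 \<le> \<gamma> i"
  using gain_mono by auto

lemma gain_pos: "i \<in> {1..N} \<Longrightarrow> 0 < \<gamma> i"
  using gain_first_le gain_first_pos by fastforce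

lemma phi_antimono_right:
  assumes "i \<in> {1..N}" "j \<in> {1..N}" "k \<in> {1..N}" "j \<le> k"
  shows "phi \<gamma> i k \<le> phi \<gamma> i j"
  using assms gain_pos gain_mono[of j k] psi_antimono[of "\<gamma> i + \<gamma> j" "\<gamma> i + \<gamma> k"]
  by (simp add: phi_eq_log_plus_psi add_pos_pos)

lemma phi_le_phi_first: "i \<in> {1..N} \<Longrightarrow> j \<in> {1..N} \<Longrightarrow> phi \<gamma> i j \<le> phi \<gamma> i 1"
  using phi_antimono_right[of i 1 j] by auto

lemma phi_exchange:
  assumes "v \<in> {1..N}" "y \<in> {1..N}"
  shows "phi \<gamma> v y + log 2 (\<gamma> y) \<le> phi \<gamma> y 1 + log 2 (\<gamma> v)"
  using assms gain_pos gain_first_pos gain_first_le[of v]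
    psi_antimono[of "\<gamma> 1 + \<gamma> y" "\<gamma> v + \<gamma> y"]
  by (simp add: phi_eq_log_plus_psi add_pos_pos add.commute)

lemma phi_to_last_le:
  assumes "v \<in> {1..N}"
  shows "phi \<gamma> v N \<le> phi \<gamma> 1 N + log 2 (\<gamma> v) - log 2 (\<gamma> 1)"
proof -
  have "N \<in> {1..N}" using assms by auto
  then show ?thesis
    using assms gain_pos gain_first_pos gain_first_le[of v]
      psi_antimono[of "\<gamma> 1 + \<gamma> N" "\<gamma> v + \<gamma> N"]
    by (simp add: phi_eq_log_plus_psi add_pos_pos)
qed

lemma path_node_rate_sum_le:
  assumes "T \<subseteq> edges_on N"
  shows "rtrancl_path (\<lambda>x y. (x, y) \<in> adj T) v ys z \<Longrightarrow> z = N \<Longrightarrow> v \<noteq> N \<Longrightarrow>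
    distinct (v # ys) \<Longrightarrow> v \<in> {1..N} \<Longrightarrow>
    (\<Sum>i\<in>set (v # ys) - {N}. node_rate \<gamma> T i) \<le>
      (\<Sum>i\<in>set (v # ys) - {v, N}. phi \<gamma> i 1) + phi \<gamma> 1 N + log 2 (\<gamma> v) - log 2 (\<gamma> 1)"
proof (induction v ys z rule: rtrancl_path.induct)
  case (step v y ys z)
  have y_nbr: "y \<in> nbrs T v" using step.hyps(1) by (rule adj_imp_nbrs)
  have y_vertex: "y \<in> {1..N}" using nbrs_subset_vertices[OF assms] y_nbr by blast
  have v_rate: "node_rate \<gamma> T v \<le> phi \<gamma> v y" using node_rate_le[OF assms y_nbr] .
  have v_fresh: "v \<notin> set (y # ys)" using step.prems by simp
  have "set (v # y # ys) - {N} = insert v (set (y # ys) - {N})" using step.prems by auto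
  then have lhs: "(\<Sum>i\<in>set (v # y # ys) - {N}. node_rate \<gamma> T i) =
      node_rate \<gamma> T v + (\<Sum>i\<in>set (y # ys) - {N}. node_rate \<gamma> T i)"
    using v_fresh by (simp only:) (intro sum.insert; auto)
  have rhs: "set (v # y # ys) - {v, N} = set (y # ys) - {N}" using v_fresh by auto
  show ?case
  proof (cases "y = N")
    case True
    have "ys = []"
      using step.hyps(2) step.prems(1,3) True rtrancl_path_last[of _ y ys z] last_in_set
      by fastforce
    then show ?thesis
      using lhs rhs v_rate phi_to_last_le[OF step.prems(4)] True by simp
  next
    case False
    have IH: "(\<Sum>i\<in>set (y # ys) - {N}. node_rate \<gamma> T i) \<le>
        (\<Sum>i\<in>set (y # ys) - {y, N}. phi \<gamma> i 1) + phi \<gamma> 1 N + log 2 (\<gamma> y) - log 2 (\<gamma> 1)"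
      using step.IH step.prems False y_vertex by simp
    have "set (y # ys) - {N} = insert y (set (y # ys) - {y, N})" using False by auto
    then have "(\<Sum>i\<in>set (y # ys) - {N}. phi \<gamma> i 1) =
        phi \<gamma> y 1 + (\<Sum>i\<in>set (y # ys) - {y, N}. phi \<gamma> i 1)"
      by (simp only:) (intro sum.insert; auto)
    then show ?thesis
      unfolding lhs rhs using IH v_rate phi_exchange[OF step.prems(4) y_vertex] by linarith
  qed
qed simp

lemma spanning_tree_node_rate_sum_le:
  assumes "2 \<le> N" "spanning_tree N T"
  shows "(\<Sum>i=1..N. node_rate \<gamma> T i) \<le> (\<Sum>i=2..N. phi \<gamma> i 1) + phi \<gamma> 1 N"
proof -
  let ?c = "node_rate \<gamma> T"
  have sub: "T \<subseteq> edges_on N" and conn: "connected_on N T"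
    using assms(2) unfolding spanning_tree_def by auto
  have ends: "1 \<in> {1..N}" "N \<in> {1..N}" "N \<noteq> 1" using assms(1) by auto
  have off_path: "?c i \<le> phi \<gamma> i 1" if i: "i \<in> {2..N}" for i
  proof -
    obtain j where j: "j \<in> nbrs T i"
      by (rule connected_on_nbrs_nonempty[OF conn, of i 1]) (use i in auto)
    then have "j \<in> {1..N}" using nbrs_subset_vertices[OF sub] by blast
    then show ?thesis
      using node_rate_le[OF sub j, of \<gamma>] phi_le_phi_first[of i j] i by fastforce
  qed
  obtain xs where path: "rtrancl_path (\<lambda>x y. (x, y) \<in> adj T) 1 xs N"
    and dist: "distinct (1 # xs)" and W_sub: "set (1 # xs) \<subseteq> {1..N}"
    using connected_on_distinct_path[OF sub conn ends(1,2)] by blast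
  define W where "W = set (1 # xs)"
  have "xs \<noteq> []" using path ends(3) by (auto elim: rtrancl_path.cases)
  then have N_W: "N \<in> W" unfolding W_def using rtrancl_path_last[OF path] by auto
  have fin: "finite W" unfolding W_def by simp
  have on_path: "(\<Sum>i\<in>W - {N}. ?c i) \<le> (\<Sum>i\<in>W - {1, N}. phi \<gamma> i 1) + phi \<gamma> 1 N"
    using path_node_rate_sum_le[OF sub path] dist ends unfolding W_def by simp
  have "(\<Sum>i=1..N. ?c i) = (\<Sum>i\<in>{1..N} - W. ?c i) + (\<Sum>i\<in>W. ?c i)"
    using W_sub unfolding W_def by (intro sum.subset_diff) auto
  with sum.remove[OF fin N_W] have split_rate:
    "(\<Sum>i=1..N. ?c i) = (\<Sum>i\<in>{1..N} - W. ?c i) + (?c N + (\<Sum>i\<in>W - {N}. ?c i))"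
    by simp
  have star_split: "{2..N} = ({1..N} - W) \<union> insert N (W - {1, N})"
    using W_sub N_W ends unfolding W_def by auto
  have "(\<Sum>i=2..N. phi \<gamma> i 1) =
      (\<Sum>i\<in>{1..N} - W. phi \<gamma> i 1) + (phi \<gamma> N 1 + (\<Sum>i\<in>W - {1, N}. phi \<gamma> i 1))"
    unfolding star_split using fin N_W by (subst sum.union_disjoint) auto
  moreover have "(\<Sum>i\<in>{1..N} - W. ?c i) \<le> (\<Sum>i\<in>{1..N} - W. phi \<gamma> i 1)"
    using off_path unfolding W_def by (intro sum_mono) auto
  moreover have "?c N \<le> phi \<gamma> N 1" using off_path assms(1) by simp
  ultimately show ?thesis using split_rate on_path by linarith
qed

end

lemma nbrs_star_tree_leaf: "i \<in> {2..N} \<Longrightarrow> nbrs (star_tree N) i = {1}"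
  unfolding star_tree_def nbrs_def by (auto simp: doubleton_eq_iff)

lemma nbrs_star_tree_centre: "nbrs (star_tree N) 1 = {2..N}"
  unfolding star_tree_def nbrs_def by (auto simp: doubleton_eq_iff)

lemma spanning_tree_star_tree: "spanning_tree N (star_tree N)"
proof -
  have to_centre: "(i, 1) \<in> adj (star_tree N) \<and> (1, i) \<in> adj (star_tree N)" if "i \<in> {2..N}" for i
    using that unfolding star_tree_def adj_def by (auto simp: insert_commute)
  have "(i, 1) \<in> (adj (star_tree N))\<^sup>* \<and> (1, i) \<in> (adj (star_tree N))\<^sup>*" if "i \<in> {1..N}" for i
    using to_centre[of i] that by (cases "i = 1") auto
  then have conn: "connected_on N (star_tree N)"
    unfolding connected_on_def by (meson rtrancl_trans)
  have bridge: "\<not> connected_on N (star_tree N - {e})" if e: "e \<in> star_tree N" for e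
  proof
    assume "connected_on N (star_tree N - {e})"
    moreover obtain k where k: "k \<in> {2..N}" "e = {1, k}"
      using e unfolding star_tree_def by auto
    ultimately have "(k, 1) \<in> (adj (star_tree N - {e}))\<^sup>*"
      unfolding connected_on_def by auto
    then show False
      using k by (cases rule: converse_rtranclE) (auto simp: adj_def star_tree_def doubleton_eq_iff)
  qed
  have "star_tree N \<subseteq> edges_on N"
    unfolding star_tree_def edges_on_def by fastforce
  with conn bridge show ?thesis unfolding spanning_tree_def by blast
qed

lemma (in sorted_gains) star_tree_node_rate_sum:
  assumes "2 \<le> N"
  shows "(\<Sum>i=1..N. node_rate \<gamma> (star_tree N) i) = (\<Sum>i=2..N. phi \<gamma> i 1) + phi \<gamma> 1 N"
proof -
  have "node_rate \<gamma> (star_tree N) 1 = phi \<gamma> 1 N"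
    unfolding node_rate_def nbrs_star_tree_centre using assms
    by (intro Min_eqI) (auto intro: phi_antimono_right)
  moreover have "(\<Sum>i=1..N. node_rate \<gamma> (star_tree N) i) =
      node_rate \<gamma> (star_tree N) 1 + (\<Sum>i=2..N. node_rate \<gamma> (star_tree N) i)"
    using assms by (simp add: sum.atLeast_Suc_atMost numeral_2_eq_2)
  moreover have "(\<Sum>i=2..N. node_rate \<gamma> (star_tree N) i) = (\<Sum>i=2..N. phi \<gamma> i 1)"
    by (intro sum.cong) (simp_all add: node_rate_def nbrs_star_tree_leaf)
  ultimately show ?thesis by simp
qed

theorem lemma2:
  fixes N :: nat and \<gamma> :: "nat \<Rightarrow> real"
  assumes "N \<ge> 2"
    and "0 < \<gamma> 1"
    and "\<And>i j. 1 \<le> i \<Longrightarrow> i \<le> j \<Longrightarrow> j \<le> N \<Longrightarrow> \<gamma> i \<le> \<gamma> j"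
  shows "\<exists>T. sum_rate_optimal \<gamma> N T \<and> card (nbrs T N) = 1"
proof (intro exI conjI)
  interpret sorted_gains N \<gamma> using assms(2,3) by unfold_locales
  show "sum_rate_optimal \<gamma> N (star_tree N)"
    unfolding sum_rate_optimal_def
  proof (intro conjI allI impI spanning_tree_star_tree)
    fix T assume "spanning_tree N T"
    then have "(\<Sum>i=1..N. node_rate \<gamma> T i) \<le> (\<Sum>i=1..N. node_rate \<gamma> (star_tree N) i)"
      using spanning_tree_node_rate_sum_le star_tree_node_rate_sum assms(1) by simp
    moreover have "0 \<le> 1 / (2 * (real N - 1))" using assms(1) by simp
    ultimately show "sum_rate \<gamma> N T \<le> sum_rate \<gamma> N (star_tree N)"
      unfolding sum_rate_eq by (rule mult_left_mono)
  qed
  show "card (nbrs (star_tree N) N) = 1"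
    using nbrs_star_tree_leaf[of N N] assms(1) by simp
qed

end
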